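(* Let $L\ge2$, $\theta\in\mathbb R$, and with the notation below define, in addition to $|0;i_1,\dots,i_{L-1}\rangle$, the vectors $$|1;i_1,\dots,i_{L-1}\rangle=\begin{cases}{\mathfrak d}_{\mathrm{bd}}^*|0;i_1,\dots,i_{L-1}\rangle,& L+\sum_{j=1}^{L-1}i_j\ \text{even},\\ {\mathfrak d}_{\mathrm{bd}}|0;i_1,\dots,i_{L-1}\rangle,& L+\sum_{j=1}^{L-1}i_j\ \text{odd}.\end{cases}$$ Then $\{|i_{\mathrm{bd}};i_1,\dots,i_{L-1}\rangle: i_{\mathrm{bd}},i_1,\dots,i_{L-1}\in\{0,1\}\}$ is an orthogonal basis of $\mathcal F(\mathbb C^L)$.
   Context: $\mathcal F(\mathbb C^L)$ is the fermionic Fock space with CAR operators ${\mathfrak a}_j$, $j=1,\dots,L$, and vacuum $|\Omega\rangle$. Majorana operators: ${\mathfrak b}_{2j-1}=e^{i\theta/2}{\mathfrak a}_j+e^{-i\theta/2}{\mathfrak a}_j^*$, ${\mathfrak b}_{2j}=-ie^{i\theta/2}{\mathfrak a}_j+ie^{-i\theta/2}{\mathfrak a}_j^*$. Set ${\mathfrak d}_j=\frac12({\mathfrak b}_{2j}+i{\mathfrak b}_{2j+1})$ for $1\le j\le L-1$, ${\mathfrak d}_{\mathrm{bd}}=\frac12({\mathfrak b}_{2L}+i{\mathfrak b}_1)$, ${\mathfrak d}_j^{(0)}={\mathfrak d}_j$, ${\mathfrak d}_j^{(1)}={\mathfrak d}_j^*$, and $|0;i_1,\dots,i_{L-1}\rangle=2^{\frac{L-1}2}{\mathfrak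 d}_1^{(i_1)}\cdots{\mathfrak d}_{L-1}^{(i_{L-1})}|\Omega\rangle$ for $i_j\in\{0,1\}$. *)

theory Defs
  imports Complex_Main
begin

text \<open>Fermionic Fock space over C^L, realised in the occupation-number basis:
  a vector is a function from subsets S of {1..L} (occupied modes) to complex
  coefficients, vanishing outside Pow {1..L}.\<close>

type_synonym fock = "nat set \<Rightarrow> complex"

definition in_fock :: "nat \<Rightarrow> fock \<Rightarrow> bool" where
  "in_fock L f \<longleftrightarrow> (\<forall>S. \<not> S \<subseteq> {1..L} \<longrightarrow> f S = 0)"

definition fock_inner :: "nat \<Rightarrow> fock \<Rightarrow> fock \<Rightarrow> complex" where
  "fock_inner L f g = (\<Sum>S\<in>Pow {1..L}. cnj (f S) * g S)"

definition vac :: fock where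
  "vac = (\<lambda>S. if S = {} then 1 else 0)"

definition jw_sign :: "nat \<Rightarrow> nat set \<Rightarrow> complex" where
  "jw_sign j S = (-1) ^ card {k\<in>S. k < j}"

definition ann :: "nat \<Rightarrow> fock \<Rightarrow> fock" where
  "ann j f = (\<lambda>S. if j \<in> S then 0 else jw_sign j S * f (insert j S))"

definition cre :: "nat \<Rightarrow> fock \<Rightarrow> fock" where
  "cre j f = (\<lambda>S. if j \<in> S then jw_sign j S * f (S - {j}) else 0)"

definition maj :: "real \<Rightarrow> nat \<Rightarrow> fock \<Rightarrow> fock" where
  "maj \<theta> k f =
     (if odd k then
        (\<lambda>S. cis (\<theta>/2) * ann ((k + 1) div 2) f S + cis (-\<theta>/2) * cre ((k + 1) div 2) f S)
      else
        (\<lambda>S. - \<i> * cis (\<theta>/2) * ann (k div 2) f S + \<i> * cis (-\<theta>/2) * cre (k div 2) f S))"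

definition dmode :: "real \<Rightarrow> nat \<Rightarrow> fock \<Rightarrow> fock" where
  "dmode \<theta> j f = (\<lambda>S. (maj \<theta> (2*j) f S + \<i> * maj \<theta> (2*j+1) f S) / 2)"

definition dmode_adj :: "real \<Rightarrow> nat \<Rightarrow> fock \<Rightarrow> fock" where
  "dmode_adj \<theta> j f = (\<lambda>S. (maj \<theta> (2*j) f S - \<i> * maj \<theta> (2*j+1) f S) / 2)"

definition dbd :: "real \<Rightarrow> nat \<Rightarrow> fock \<Rightarrow> fock" where
  "dbd \<theta> L f = (\<lambda>S. (maj \<theta> (2*L) f S + \<i> * maj \<theta> 1 f S) / 2)"

definition dbd_adj :: "real \<Rightarrow> nat \<Rightarrow> fock \<Rightarrow> fock" where
  "dbd_adj \<theta> L f = (\<lambda>S. (maj \<theta> (2*L) f S - \<i> * maj \<theta> 1 f S) / 2)"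

definition dpow :: "real \<Rightarrow> nat \<Rightarrow> nat \<Rightarrow> fock \<Rightarrow> fock" where
  "dpow \<theta> j i = (if i = 0 then dmode \<theta> j else dmode_adj \<theta> j)"

definition ket0 :: "real \<Rightarrow> nat \<Rightarrow> (nat \<Rightarrow> nat) \<Rightarrow> fock" where
  "ket0 \<theta> L i = (\<lambda>S. complex_of_real (2 powr ((real L - 1) / 2)) *
      foldr (\<lambda>j g. dpow \<theta> j (i j) g) [1..<L] vac S)"

definition ket :: "real \<Rightarrow> nat \<Rightarrow> nat \<Rightarrow> (nat \<Rightarrow> nat) \<Rightarrow> fock" where
  "ket \<theta> L ib i =
     (if ib = 0 then ket0 \<theta> L i
      else if even (L + (\<Sum>j\<in>{1..<L}. i j)) then dbd_adj \<theta> L (ket0 \<theta> L i)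
      else dbd \<theta> L (ket0 \<theta> L i))"

definition idx :: "nat \<Rightarrow> (nat \<Rightarrow> nat) set" where
  "idx L = {i. (\<forall>j\<in>{1..<L}. i j \<in> {0,1}) \<and> (\<forall>j. j \<notin> {1..<L} \<longrightarrow> i j = 0)}"

end

(*
  Each Majorana operator b_k changes the occupation number by one, so |0; i> is supported on
  occupation sets of parity L - 1 and |1; i> on those of parity L; this separates different i_bd.
  For i <> i' pick j with i_j <> i'_j. Operators d built from disjoint Majorana pairs anticommute,
  so d_j^(i_j) can be moved to the front of both vectors; as the adjoint of d_j^(x) is d_j^(1-x)
  and d_j^(x) squares to zero, the inner product vanishes. The vectors are nonzero because their
  coefficients at the occupation sets {1..L-1}, and for i_bd = 1 at {2..L-1}, are computed
  explicitly. Finally 2^L nonzero pairwise orthogonal vectors are linearly independent and hence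
  span the 2^L-dimensional Fock space.
*)
theory Submission
  imports Defs "HOL-Library.Function_Algebras"
begin

lemma jw_sign_insert:
  "m \<notin> S \<Longrightarrow> jw_sign n (insert m S) = (if m < n then -1 else 1) * jw_sign n S"
proof -
  assume "m \<notin> S"
  moreover have "{k\<in>insert m S. k < n} = (if m < n then insert m {k\<in>S. k < n} else {k\<in>S. k < n})"
    by auto
  ultimately show ?thesis
    by (simp add: jw_sign_def)
qed

lemma jw_sign_remove:
  "m \<in> S \<Longrightarrow> jw_sign n (S - {m}) = (if m < n then -1 else 1) * jw_sign n S"
  using jw_sign_insert[of m "S - {m}" n] by (auto simp: insert_absorb)

lemma jw_sign_insert_self: "jw_sign m (insert m S) = jw_sign m S"
  by (cases "m \<in> S") (auto simp: insert_absorb jw_sign_insert)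

lemma jw_sign_remove_self: "jw_sign m (S - {m}) = jw_sign m S"
  by (cases "m \<in> S") (auto simp: jw_sign_remove)

lemma jw_sign_mult_self: "jw_sign n S * jw_sign n S = 1"
  by (simp add: jw_sign_def flip: power_add mult_2)

lemma cnj_jw_sign: "cnj (jw_sign n S) = jw_sign n S"
  by (simp add: jw_sign_def)

lemma jw_sign_eq_1:
  assumes "\<forall>k\<in>S. n \<le> k"
  shows "jw_sign n S = 1"
proof -
  have "{k\<in>S. k < n} = {}"
    using assms by auto
  then show ?thesis
    unfolding jw_sign_def by (metis card.empty power_0)
qed

lemma ann_ann_anticomm: "ann m (ann n f) S + ann n (ann m f) S = 0"
  by (cases "m = n") (auto simp: ann_def jw_sign_insert insert_commute)

lemma cre_cre_anticomm: "cre m (cre n f) S + cre n (cre m f) S = 0"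
  by (cases "m = n") (auto simp: cre_def jw_sign_remove insert_commute simp flip: Diff_insert2)

lemma ann_cre_anticomm:
  "ann m (cre n f) S + cre n (ann m f) S = (if m = n then f S else 0)"
proof (cases "m = n")
  case True
  then show ?thesis
    by (auto simp: ann_def cre_def jw_sign_insert_self jw_sign_remove_self jw_sign_mult_self
        insert_absorb)
next
  case False
  then have "insert m S - {n} = insert m (S - {n})"
    by auto
  with False show ?thesis
    by (auto simp: ann_def cre_def jw_sign_insert jw_sign_remove)
qed

lemma ann_lincomb: "ann m (\<lambda>T. a * f T + b * g T) S = a * ann m f S + b * ann m g S"
  by (simp add: ann_def algebra_simps)

lemma cre_lincomb: "cre m (\<lambda>T. a * f T + b * g T) S = a * cre m f S + b * cre m g S"
  by (simp add: cre_def algebra_simps)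

lemma fock_inner_lincomb_right:
  "fock_inner L f (\<lambda>S. a * g S + b * h S) = a * fock_inner L f g + b * fock_inner L f h"
  by (simp add: fock_inner_def sum_distrib_left sum.distrib algebra_simps)

lemma fock_inner_lincomb_left:
  "fock_inner L (\<lambda>S. a * g S + b * h S) f = cnj a * fock_inner L g f + cnj b * fock_inner L h f"
  by (simp add: fock_inner_def sum_distrib_left sum.distrib algebra_simps)

lemma fock_inner_scale_left: "fock_inner L (\<lambda>S. c * f S) g = cnj c * fock_inner L f g"
  by (simp add: fock_inner_def sum_distrib_left algebra_simps)

lemma fock_inner_scale_right: "fock_inner L f (\<lambda>S. c * g S) = c * fock_inner L f g"
  by (simp add: fock_inner_def sum_distrib_left algebra_simps)

lemma fock_inner_swap: "fock_inner L g f = cnj (fock_inner L f g)"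
  by (simp add: fock_inner_def mult.commute)

lemma fock_inner_ann:
  assumes m: "m \<in> {1..L}"
  shows "fock_inner L f (ann m g) = fock_inner L (cre m f) g"
proof -
  let ?A = "{S\<in>Pow {1..L}. m \<notin> S}" and ?B = "{S\<in>Pow {1..L}. m \<in> S}"
  have "fock_inner L f (ann m g) =
      (\<Sum>S\<in>Pow {1..L}. if m \<notin> S then cnj (f S) * (jw_sign m S * g (insert m S)) else 0)"
    unfolding fock_inner_def ann_def by (intro sum.cong) auto
  also have "\<dots> = (\<Sum>S\<in>?A. cnj (f S) * (jw_sign m S * g (insert m S)))"
    by (rule sum.inter_filter[symmetric]) simp
  also have "\<dots> = (\<Sum>T\<in>?B. cnj (jw_sign m T * f (T - {m})) * g T)"
  proof (rule sum.reindex_bij_witness[of _ "\<lambda>T. T - {m}" "insert m"])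
    show "\<And>a. a \<in> ?A \<Longrightarrow> cnj (jw_sign m (insert m a) * f (insert m a - {m})) * g (insert m a) =
         cnj (f a) * (jw_sign m a * g (insert m a))"
      by (auto simp: jw_sign_insert_self cnj_jw_sign)
  qed (use m in auto)
  also have "\<dots> = (\<Sum>T\<in>Pow {1..L}. if m \<in> T then cnj (jw_sign m T * f (T - {m})) * g T else 0)"
    by (rule sum.inter_filter) simp
  also have "\<dots> = fock_inner L (cre m f) g"
    unfolding fock_inner_def cre_def by (intro sum.cong) auto
  finally show ?thesis .
qed

lemma fock_inner_cre:
  assumes "m \<in> {1..L}"
  shows "fock_inner L f (cre m g) = fock_inner L (ann m f) g"
  using fock_inner_ann[OF assms, of g f] by (simp add: fock_inner_swap[of L f] fock_inner_swap[of L _ g])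

definition mode_comb :: "complex \<Rightarrow> complex \<Rightarrow> nat \<Rightarrow> fock \<Rightarrow> fock" where
  "mode_comb \<alpha> \<beta> m f = (\<lambda>S. \<alpha> * ann m f S + \<beta> * cre m f S)"

lemma mode_comb_lincomb:
  "mode_comb \<alpha> \<beta> m (\<lambda>T. a * f T + b * g T) S = a * mode_comb \<alpha> \<beta> m f S + b * mode_comb \<alpha> \<beta> m g S"
  unfolding mode_comb_def ann_lincomb cre_lincomb by (simp add: algebra_simps)

lemma mode_comb_anticomm:
  "mode_comb \<alpha> \<beta> m (mode_comb \<gamma> \<delta> n f) S + mode_comb \<gamma> \<delta> n (mode_comb \<alpha> \<beta> m f) S
     = (if m = n then (\<alpha> * \<delta> + \<beta> * \<gamma>) * f S else 0)"
proof -
  have "mode_comb \<alpha> \<beta> m (mode_comb \<gamma> \<delta> n f) S + mode_comb \<gamma> \<delta> n (mode_comb \<alpha> \<beta> m f) S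
      = \<alpha> * \<gamma> * (ann m (ann n f) S + ann n (ann m f) S)
      + \<alpha> * \<delta> * (ann m (cre n f) S + cre n (ann m f) S)
      + \<beta> * \<gamma> * (ann n (cre m f) S + cre m (ann n f) S)
      + \<beta> * \<delta> * (cre m (cre n f) S + cre n (cre m f) S)"
    unfolding mode_comb_def ann_lincomb cre_lincomb by (simp add: algebra_simps)
  then show ?thesis
    by (simp add: ann_ann_anticomm cre_cre_anticomm ann_cre_anticomm distrib_right)
qed

lemma fock_inner_mode_comb:
  assumes "m \<in> {1..L}"
  shows "fock_inner L f (mode_comb \<alpha> \<beta> m g) = fock_inner L (mode_comb (cnj \<beta>) (cnj \<alpha>) m f) g"
  unfolding mode_comb_def fock_inner_lincomb_right fock_inner_lincomb_left
    fock_inner_ann[OF assms] fock_inner_cre[OF assms] by simp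

lemma maj_eq_mode_comb:
  "maj \<theta> k = mode_comb (if odd k then cis (\<theta>/2) else - \<i> * cis (\<theta>/2))
                         (if odd k then cis (-\<theta>/2) else \<i> * cis (-\<theta>/2)) ((k + 1) div 2)"
  by (auto simp: maj_def mode_comb_def fun_eq_iff)

lemma maj_lincomb: "maj \<theta> k (\<lambda>T. a * f T + b * g T) S = a * maj \<theta> k f S + b * maj \<theta> k g S"
  unfolding maj_eq_mode_comb by (rule mode_comb_lincomb)

lemma maj_anticomm:
  "maj \<theta> k (maj \<theta> l f) S + maj \<theta> l (maj \<theta> k f) S = (if k = l then 2 * f S else 0)"
proof -
  have "k = l" if "(k + 1) div 2 = (l + 1) div 2" "odd k \<longleftrightarrow> odd l"
    using that by presburger
  then show ?thesis
    unfolding maj_eq_mode_comb mode_comb_anticomm by (auto simp: cis_mult algebra_simps)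
qed

lemma fock_inner_maj:
  assumes "1 \<le> k" "k \<le> 2 * L"
  shows "fock_inner L f (maj \<theta> k g) = fock_inner L (maj \<theta> k f) g"
proof -
  have mode: "(k + 1) div 2 \<in> {1..L}"
    using assms by auto
  show ?thesis
    unfolding maj_eq_mode_comb fock_inner_mode_comb[OF mode] by (cases "odd k") (simp_all add: cis_cnj)
qed

(* (b_p + i eps b_q) / 2; with eps = 1 or -1 this covers d_j, d_j^*, d_bd and d_bd^*. *)
definition dpair :: "real \<Rightarrow> nat \<Rightarrow> nat \<Rightarrow> real \<Rightarrow> fock \<Rightarrow> fock" where
  "dpair \<theta> p q \<epsilon> f = (\<lambda>S. 1/2 * maj \<theta> p f S + of_real \<epsilon> * \<i> / 2 * maj \<theta> q f S)"

lemma dpair_lincomb: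
  "dpair \<theta> p q \<epsilon> (\<lambda>T. a * f T + b * g T) S = a * dpair \<theta> p q \<epsilon> f S + b * dpair \<theta> p q \<epsilon> g S"
  unfolding dpair_def maj_lincomb by (simp add: algebra_simps)

lemma dpair_scale: "dpair \<theta> p q \<epsilon> (\<lambda>T. a * f T) = (\<lambda>S. a * dpair \<theta> p q \<epsilon> f S)"
  using dpair_lincomb[of \<theta> p q \<epsilon> a f 0 f] by (simp add: fun_eq_iff)

lemma dpair_anticomm:
  assumes "p \<noteq> p'" "p \<noteq> q'" "q \<noteq> p'" "q \<noteq> q'"
  shows "dpair \<theta> p q \<epsilon> (dpair \<theta> p' q' \<epsilon>' f) = (\<lambda>S. - dpair \<theta> p' q' \<epsilon>' (dpair \<theta> p q \<epsilon> f) S)"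
proof
  fix S
  let ?a = "of_real \<epsilon> * \<i>" and ?b = "of_real \<epsilon>' * \<i>"
  have "4 * (dpair \<theta> p q \<epsilon> (dpair \<theta> p' q' \<epsilon>' f) S + dpair \<theta> p' q' \<epsilon>' (dpair \<theta> p q \<epsilon> f) S)
      = (maj \<theta> p (maj \<theta> p' f) S + maj \<theta> p' (maj \<theta> p f) S)
      + ?b * (maj \<theta> p (maj \<theta> q' f) S + maj \<theta> q' (maj \<theta> p f) S)
      + ?a * (maj \<theta> q (maj \<theta> p' f) S + maj \<theta> p' (maj \<theta> q f) S)
      + ?a * ?b * (maj \<theta> q (maj \<theta> q' f) S + maj \<theta> q' (maj \<theta> q f) S)"
    unfolding dpair_def maj_lincomb by (simp add: algebra_simps)
  also have "\<dots> = 0"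
    using assms by (simp add: maj_anticomm)
  finally have "dpair \<theta> p q \<epsilon> (dpair \<theta> p' q' \<epsilon>' f) S + dpair \<theta> p' q' \<epsilon>' (dpair \<theta> p q \<epsilon> f) S = 0"
    by (simp only: mult_eq_0_iff) simp
  then show "dpair \<theta> p q \<epsilon> (dpair \<theta> p' q' \<epsilon>' f) S = - dpair \<theta> p' q' \<epsilon>' (dpair \<theta> p q \<epsilon> f) S"
    by (simp add: eq_neg_iff_add_eq_0)
qed

lemma dpair_dpair_self:
  assumes "p \<noteq> q" "\<epsilon> * \<epsilon> = 1"
  shows "dpair \<theta> p q \<epsilon> (dpair \<theta> p q \<epsilon> f) = (\<lambda>S. 0)"
proof
  fix S
  let ?a = "of_real \<epsilon> * \<i>"
  have "8 * dpair \<theta> p q \<epsilon> (dpair \<theta> p q \<epsilon> f) S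
      = (maj \<theta> p (maj \<theta> p f) S + maj \<theta> p (maj \<theta> p f) S)
      + 2 * ?a * (maj \<theta> p (maj \<theta> q f) S + maj \<theta> q (maj \<theta> p f) S)
      + ?a * ?a * (maj \<theta> q (maj \<theta> q f) S + maj \<theta> q (maj \<theta> q f) S)"
    unfolding dpair_def maj_lincomb by (simp add: algebra_simps)
  also have "\<dots> = 2 * (1 - of_real (\<epsilon> * \<epsilon>)) * f S"
    using assms(1) by (simp add: maj_anticomm algebra_simps)
  finally show "dpair \<theta> p q \<epsilon> (dpair \<theta> p q \<epsilon> f) S = 0"
    using assms(2) by simp
qed

lemma fock_inner_dpair:
  assumes "1 \<le> p" "p \<le> 2 * L" "1 \<le> q" "q \<le> 2 * L"
  shows "fock_inner L f (dpair \<theta> p q \<epsilon> g) = fock_inner L (dpair \<theta> p q (- \<epsilon>) f) g"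
  using fock_inner_lincomb_right[of L f "1/2" "maj \<theta> p g" "of_real \<epsilon> * \<i> / 2" "maj \<theta> q g"]
    fock_inner_lincomb_left[of L "1/2" "maj \<theta> p f" "- of_real \<epsilon> * \<i> / 2" "maj \<theta> q f" g]
  unfolding dpair_def fock_inner_maj[OF assms(1,2)] fock_inner_maj[OF assms(3,4)]
  by simp

lemma fock_inner_dpair_opposite:
  assumes "1 \<le> p" "p \<le> 2 * L" "1 \<le> q" "q \<le> 2 * L" "p \<noteq> q" "\<epsilon> * \<epsilon> = 1"
  shows "fock_inner L (\<lambda>S. c * dpair \<theta> p q \<epsilon> f S) (\<lambda>S. c' * dpair \<theta> p q (- \<epsilon>) g S) = 0"
  using assms
  by (simp add: fock_inner_scale_left fock_inner_scale_right fock_inner_dpair dpair_dpair_self)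
    (simp add: fock_inner_def)

definition mode_sign :: "nat \<Rightarrow> real" where
  "mode_sign x = (if x = 0 then 1 else -1)"

definition bd_sign :: "nat \<Rightarrow> (nat \<Rightarrow> nat) \<Rightarrow> real" where
  "bd_sign L i = (if even (L + (\<Sum>j\<in>{1..<L}. i j)) then -1 else 1)"

lemma dpow_eq_dpair: "dpow \<theta> j x = dpair \<theta> (2*j) (2*j+1) (mode_sign x)"
  by (auto simp: dpow_def dmode_def dmode_adj_def dpair_def mode_sign_def fun_eq_iff field_simps)

lemma ket_eq_dpair_ket0:
  "p \<noteq> 0 \<Longrightarrow> ket \<theta> L p i = dpair \<theta> (2*L) 1 (bd_sign L i) (ket0 \<theta> L i)"
  by (auto simp: ket_def bd_sign_def dbd_def dbd_adj_def dpair_def fun_eq_iff field_simps)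

definition dprod :: "real \<Rightarrow> (nat \<Rightarrow> nat) \<Rightarrow> nat list \<Rightarrow> fock" where
  "dprod \<theta> i js = foldr (\<lambda>j. dpow \<theta> j (i j)) js vac"

lemma dprod_Nil [simp]: "dprod \<theta> i [] = vac"
  and dprod_Cons [simp]: "dprod \<theta> i (j # js) = dpow \<theta> j (i j) (dprod \<theta> i js)"
  by (simp_all add: dprod_def)

lemma ket0_eq_dprod:
  "ket0 \<theta> L i = (\<lambda>S. complex_of_real (2 powr ((real L - 1) / 2)) * dprod \<theta> i [1..<L] S)"
  by (simp add: ket0_def dprod_def)

definition parity_supported :: "nat set \<Rightarrow> nat \<Rightarrow> fock \<Rightarrow> bool" where
  "parity_supported A r f \<longleftrightarrow> (\<forall>S. f S \<noteq> 0 \<longrightarrow> S \<subseteq> A \<and> even (card S + r))"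

lemma parity_supported_vac: "parity_supported A 0 vac"
  by (simp add: parity_supported_def vac_def)

lemma parity_supported_mono: "A \<subseteq> B \<Longrightarrow> parity_supported A r f \<Longrightarrow> parity_supported B r f"
  by (auto simp: parity_supported_def)

lemma parity_supported_lincomb:
  "parity_supported A r f \<Longrightarrow> parity_supported A r g \<Longrightarrow>
    parity_supported A r (\<lambda>S. a * f S + b * g S)"
  unfolding parity_supported_def by (metis add_0 mult_zero_right)

lemma parity_supported_ann:
  assumes "finite A" "parity_supported A r f"
  shows "parity_supported A (Suc r) (ann m f)"
  unfolding parity_supported_def
proof (intro allI impI)
  fix S assume "ann m f S \<noteq> 0"
  then have "m \<notin> S" "f (insert m S) \<noteq> 0"
    by (auto simp: ann_def split: if_splits)
  with assms have sub: "insert m S \<subseteq> A" and par: "even (card (insert m S) + r)"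
    by (auto simp: parity_supported_def)
  have "finite S"
    using finite_subset[OF sub \<open>finite A\<close>] by simp
  with sub par \<open>m \<notin> S\<close> show "S \<subseteq> A \<and> even (card S + Suc r)"
    by simp
qed

lemma parity_supported_cre:
  assumes "finite A" "parity_supported A r f"
  shows "parity_supported (insert m A) (Suc r) (cre m f)"
  unfolding parity_supported_def
proof (intro allI impI)
  fix S assume "cre m f S \<noteq> 0"
  then have "m \<in> S" "f (S - {m}) \<noteq> 0"
    by (auto simp: cre_def split: if_splits)
  with assms have sub: "S - {m} \<subseteq> A" and par: "even (card (S - {m}) + r)"
    by (auto simp: parity_supported_def)
  have "finite S"
    using finite_subset[OF sub \<open>finite A\<close>] by simp
  with \<open>m \<in> S\<close> have "card S = Suc (card (S - {m}))"
    by (metis card_Suc_Diff1)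
  with sub par show "S \<subseteq> insert m A \<and> even (card S + Suc r)"
    by auto
qed

lemma parity_supported_maj:
  assumes "finite A" "parity_supported A r f"
  shows "parity_supported (insert ((k + 1) div 2) A) (Suc r) (maj \<theta> k f)"
  unfolding maj_eq_mode_comb mode_comb_def
  using assms by (intro parity_supported_lincomb parity_supported_cre
      parity_supported_mono[OF _ parity_supported_ann]) auto

lemma parity_supported_dpair:
  assumes "finite A" "parity_supported A r f"
  shows "parity_supported (insert ((p + 1) div 2) (insert ((q + 1) div 2) A)) (Suc r) (dpair \<theta> p q \<epsilon> f)"
  unfolding dpair_def
  using assms by (intro parity_supported_lincomb parity_supported_mono[OF _ parity_supported_maj]) auto

lemma parity_supported_dprod:
  "parity_supported (\<Union>j\<in>set js. {j, Suc j}) (length js) (dprod \<theta> i js)"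
proof (induction js)
  case Nil
  show ?case
    by (simp add: parity_supported_vac)
next
  case (Cons j js)
  then show ?case
    using parity_supported_dpair[OF _ Cons.IH, of "2*j" "2*j+1" \<theta> "mode_sign (i j)"]
    by (simp add: dpow_eq_dpair insert_commute)
qed

lemma parity_supported_ket:
  assumes "L \<ge> 1"
  shows "parity_supported {1..L} (if p = 0 then L - 1 else L) (ket \<theta> L p i)"
proof -
  have "(\<Union>j\<in>set [1..<L]. {j, Suc j}) \<subseteq> {1..L}"
    by auto
  from parity_supported_mono[OF this parity_supported_dprod]
  have "parity_supported {1..L} (L - 1) (dprod \<theta> i [1..<L])"
    by simp
  then have ket0: "parity_supported {1..L} (L - 1) (ket0 \<theta> L i)"
    by (simp add: parity_supported_def ket0_eq_dprod)
  show ?thesis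
  proof (cases "p = 0")
    case True
    with ket0 show ?thesis
      by (simp add: ket_def)
  next
    case False
    have "insert L (insert 1 {1..L}) = {1..L}"
      using assms by auto
    with parity_supported_dpair[OF _ ket0, of "2*L" 1 \<theta> "bd_sign L i"] False assms show ?thesis
      by (simp add: ket_eq_dpair_ket0)
  qed
qed

lemma fock_inner_opposite_parity:
  assumes "parity_supported A r f" "parity_supported B r' g" "odd (r + r')"
  shows "fock_inner L f g = 0"
  unfolding fock_inner_def
proof (rule sum.neutral, rule ballI)
  fix S
  have "f S = 0 \<or> g S = 0"
    using assms by (auto simp: parity_supported_def)
  then show "cnj (f S) * g S = 0"
    by auto
qed

lemma fock_inner_ket_different_parity:
  assumes "1 \<le> L" "p = 0 \<longleftrightarrow> q \<noteq> 0"
  shows "fock_inner L (ket \<theta> L p i) (ket \<theta> L q i') = 0"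
  using assms by (intro fock_inner_opposite_parity[OF parity_supported_ket parity_supported_ket]) auto

lemma dprod_factor_out:
  assumes "distinct js" "j \<in> set js"
  shows "\<exists>c U. dprod \<theta> i js = (\<lambda>S. c * dpow \<theta> j (i j) U S)"
  using assms
proof (induction js)
  case Nil
  then show ?case
    by simp
next
  case (Cons k js)
  show ?case
  proof (cases "k = j")
    case True
    then show ?thesis
      by (intro exI[of _ 1] exI[of _ "dprod \<theta> i js"]) simp
  next
    case False
    with Cons obtain c U where U: "dprod \<theta> i js = (\<lambda>S. c * dpow \<theta> j (i j) U S)"
      by auto
    have "dprod \<theta> i (k # js) = (\<lambda>S. c * dpow \<theta> k (i k) (dpow \<theta> j (i j) U) S)"
      by (simp add: U dpair_scale dpow_eq_dpair)
    also have "\<dots> = (\<lambda>S. - c * dpow \<theta> j (i j) (dpow \<theta> k (i k) U) S)"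
      using False dpair_anticomm[of "2*k" "2*j" "2*j+1" "2*k+1" \<theta> "mode_sign (i k)" "mode_sign (i j)" U]
      by (simp add: dpow_eq_dpair)
    finally show ?thesis
      by blast
  qed
qed

lemma ket_factor_out:
  assumes "1 \<le> j" "j < L"
  shows "\<exists>c U. ket \<theta> L p i = (\<lambda>S. c * dpow \<theta> j (i j) U S)"
proof -
  obtain c U where U: "dprod \<theta> i [1..<L] = (\<lambda>S. c * dpow \<theta> j (i j) U S)"
    using dprod_factor_out[of "[1..<L]" j \<theta> i] assms by auto
  define c' where "c' = complex_of_real (2 powr ((real L - 1) / 2)) * c"
  have ket0: "ket0 \<theta> L i = (\<lambda>S. c' * dpow \<theta> j (i j) U S)"
    unfolding ket0_eq_dprod U c'_def by (simp add: mult.assoc)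
  show ?thesis
  proof (cases "p = 0")
    case True
    with ket0 show ?thesis
      by (auto simp: ket_def)
  next
    case False
    have "ket \<theta> L p i = (\<lambda>S. c' * dpair \<theta> (2*L) 1 (bd_sign L i) (dpow \<theta> j (i j) U) S)"
      by (simp add: ket_eq_dpair_ket0[OF False] ket0 dpair_scale)
    also have "\<dots> = (\<lambda>S. - c' * dpow \<theta> j (i j) (dpair \<theta> (2*L) 1 (bd_sign L i) U) S)"
      using assms dpair_anticomm[of "2*L" "2*j" "2*j+1" 1 \<theta> "bd_sign L i" "mode_sign (i j)" U]
      by (simp add: dpow_eq_dpair)
    finally show ?thesis
      by blast
  qed
qed

lemma fock_inner_ket_different_index:
  assumes "i \<in> idx L" "i' \<in> idx L" "i \<noteq> i'"
  shows "fock_inner L (ket \<theta> L p i) (ket \<theta> L p' i') = 0"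
proof -
  from assms(3) obtain j where ne: "i j \<noteq> i' j"
    by auto
  with assms(1,2) have j: "j \<in> {1..<L}"
    unfolding idx_def mem_Collect_eq by metis
  with assms(1,2) have "i j \<in> {0,1}" "i' j \<in> {0,1}"
    using assms by (auto simp: idx_def)
  with ne have sign: "mode_sign (i' j) = - mode_sign (i j)" "mode_sign (i j) * mode_sign (i j) = 1"
    by (auto simp: mode_sign_def)
  obtain c U c' U' where "ket \<theta> L p i = (\<lambda>S. c * dpow \<theta> j (i j) U S)"
    and "ket \<theta> L p' i' = (\<lambda>S. c' * dpow \<theta> j (i' j) U' S)"
    using ket_factor_out[of j L] j by (metis atLeastLessThan_iff)
  with j sign show ?thesis
    by (simp add: dpow_eq_dpair fock_inner_dpair_opposite)
qed

lemma dpow_at_insert_self: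
  assumes "\<forall>T. j \<in> T \<longrightarrow> g T = 0" "\<forall>k\<in>S. j < k"
  shows "dpow \<theta> j x g (insert j S) = \<i>/2 * cis (-\<theta>/2) * g S"
proof -
  have "j \<notin> S" "insert j S - {j} = S"
    using assms(2) by auto
  moreover have "jw_sign j (insert j S) = 1"
    using assms(2) by (intro jw_sign_eq_1) auto
  ultimately show ?thesis
    using assms(1) by (auto simp: dpow_eq_dpair dpair_def maj_def ann_def cre_def)
qed

lemma dpow_at_insert_Suc:
  assumes "\<forall>T. j \<in> T \<longrightarrow> g T = 0" "\<forall>k\<in>S. Suc j < k"
  shows "dpow \<theta> j x g (insert (Suc j) S) = of_real (mode_sign x) * \<i>/2 * cis (-\<theta>/2) * g S"
proof -
  have "j \<notin> insert (Suc j) S" "Suc j \<notin> S" "insert (Suc j) S - {Suc j} = S"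
    using assms(2) by auto
  moreover have "jw_sign (Suc j) (insert (Suc j) S) = 1"
    using assms(2) by (intro jw_sign_eq_1) auto
  ultimately show ?thesis
    using assms(1) by (auto simp: dpow_eq_dpair dpair_def maj_def ann_def cre_def)
qed

lemma dprod_upt_vanishes: "j \<in> T \<Longrightarrow> dprod \<theta> i [Suc j..<L] T = 0"
  using parity_supported_dprod[of "[Suc j..<L]" \<theta> i] by (fastforce simp: parity_supported_def)

lemma dprod_upt_at_upt:
  assumes "j \<le> L"
  shows "dprod \<theta> i [j..<L] {j..<L} = (\<i>/2 * cis (-\<theta>/2)) ^ (L - j)"
  using assms
proof (induction j rule: inc_induct)
  case base
  then show ?case
    by (simp add: vac_def)
next
  case (step n)
  then have "[n..<L] = n # [Suc n..<L]" "{n..<L} = insert n {Suc n..<L}" "L - n = Suc (L - Suc n)"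
    by (auto simp: upt_conv_Cons)
  with step show ?case
    by (simp add: dpow_at_insert_self dprod_upt_vanishes)
qed

lemma dprod_upt_at_Suc_upto:
  assumes "j \<le> L"
  shows "dprod \<theta> i [j..<L] {Suc j..L} =
    (\<i>/2 * cis (-\<theta>/2)) ^ (L - j) * (\<Prod>k\<in>{j..<L}. of_real (mode_sign (i k)))"
  using assms
proof (induction j rule: inc_induct)
  case base
  then show ?case
    by (simp add: vac_def)
next
  case (step n)
  then have "[n..<L] = n # [Suc n..<L]" "{Suc n..L} = insert (Suc n) {Suc (Suc n)..L}"
      "L - n = Suc (L - Suc n)"
    by (auto simp: upt_conv_Cons)
  with step show ?case
    by (simp add: dpow_at_insert_Suc dprod_upt_vanishes prod.atLeast_Suc_lessThan)
qed

lemma ket0_at_upt: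
  assumes "1 \<le> L"
  shows "ket0 \<theta> L i {1..<L} = of_real (2 powr ((real L - 1) / 2)) * (\<i>/2 * cis (-\<theta>/2)) ^ (L - 1)"
  using dprod_upt_at_upt[OF assms] by (simp add: ket0_eq_dprod)

lemma ket0_at_upto:
  assumes "1 \<le> L"
  shows "ket0 \<theta> L i {2..L} = of_real (2 powr ((real L - 1) / 2)) * (\<i>/2 * cis (-\<theta>/2)) ^ (L - 1) *
    (\<Prod>k\<in>{1..<L}. of_real (mode_sign (i k)))"
  using dprod_upt_at_Suc_upto[OF assms] by (simp add: ket0_eq_dprod numeral_2_eq_2)

lemma ket0_nonzero:
  assumes "1 \<le> L"
  shows "ket0 \<theta> L i \<noteq> (\<lambda>S. 0)"
proof -
  have "ket0 \<theta> L i {1..<L} \<noteq> 0"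
    using ket0_at_upt[OF assms] by simp
  then show ?thesis
    by auto
qed

lemma prod_mode_sign:
  assumes "i \<in> idx L"
  shows "(\<Prod>k\<in>{1..<L}. complex_of_real (mode_sign (i k))) = (-1) ^ (\<Sum>k\<in>{1..<L}. i k)"
proof -
  have "(\<Prod>k\<in>{1..<L}. complex_of_real (mode_sign (i k))) = (\<Prod>k\<in>{1..<L}. (-1) ^ i k)"
  proof (rule prod.cong)
    fix k assume "k \<in> {1..<L}"
    then have "i k \<in> {0,1}"
      using assms by (auto simp: idx_def)
    then show "complex_of_real (mode_sign (i k)) = (-1) ^ i k"
      by (auto simp: mode_sign_def)
  qed simp
  then show ?thesis
    by (simp add: power_sum)
qed

lemma ket_boundary_at:
  assumes "2 \<le> L" "p \<noteq> 0"
  shows "ket \<theta> L p i {2..<L} = of_real (2 powr ((real L - 1) / 2)) * (\<i>/2 * cis (-\<theta>/2)) ^ (L - 1) *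
    cis (\<theta>/2) * \<i>/2 * (of_real (bd_sign L i) - (-1) ^ L * (\<Prod>k\<in>{1..<L}. of_real (mode_sign (i k))))"
proof -
  let ?S = "{2..<L}" and ?h = "ket0 \<theta> L i"
  have L: "1 \<le> L" "insert L ?S = {2..L}" "insert 1 ?S = {1..<L}" "L \<notin> ?S" "1 \<notin> ?S"
    using assms(1) by auto
  have "{k\<in>?S. k < L} = ?S"
    by auto
  then have "jw_sign L ?S = (-1) ^ (L - 2)"
    by (simp add: jw_sign_def)
  also have "\<dots> = (-1) ^ L"
    using assms(1) by (simp add: minus_one_power_iff even_diff_nat)
  finally have "maj \<theta> (2*L) ?h ?S = - \<i> * cis (\<theta>/2) * (-1) ^ L * ?h {2..L}"
    using L by (simp add: maj_def ann_def cre_def)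
  moreover have "maj \<theta> 1 ?h ?S = cis (\<theta>/2) * ?h {1..<L}"
    using L by (simp add: maj_def ann_def cre_def jw_sign_eq_1)
  ultimately show ?thesis
    unfolding ket_eq_dpair_ket0[OF assms(2)] dpair_def ket0_at_upt[OF L(1)] ket0_at_upto[OF L(1)]
    by (simp add: algebra_simps)
qed

lemma ket_nonzero:
  assumes "2 \<le> L" "i \<in> idx L"
  shows "ket \<theta> L p i \<noteq> (\<lambda>S. 0)"
proof (cases "p = 0")
  case True
  with assms(1) show ?thesis
    by (simp add: ket_def ket0_nonzero)
next
  case False
  \<comment> \<open>The choice between d_bd and d_bd^* made by bd_sign is what prevents cancellation here.\<close>
  have "of_real (bd_sign L i) - (-1) ^ L * (\<Prod>k\<in>{1..<L}. of_real (mode_sign (i k))) \<noteq> (0::complex)"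
    unfolding prod_mode_sign[OF assms(2)] by (auto simp: bd_sign_def simp flip: power_add)
  then have "ket \<theta> L p i {2..<L} \<noteq> 0"
    using assms(1) False by (simp add: ket_boundary_at)
  then show ?thesis
    by auto
qed

lemma in_fock_ket: "1 \<le> L \<Longrightarrow> in_fock L (ket \<theta> L p i)"
  using parity_supported_ket[of L p \<theta> i] by (auto simp: in_fock_def parity_supported_def)

lemma fock_inner_ket_distinct:
  assumes "1 \<le> L" "p \<in> {0,1}" "q \<in> {0,1}" "i \<in> idx L" "i' \<in> idx L" "(p, i) \<noteq> (q, i')"
  shows "fock_inner L (ket \<theta> L p i) (ket \<theta> L q i') = 0"
proof (cases "i = i'")
  case True
  with assms show ?thesis
    by (intro fock_inner_ket_different_parity) auto
next
  case False
  with assms show ?thesis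
    by (intro fock_inner_ket_different_index)
qed

lemma fock_inner_self_nonzero:
  assumes "in_fock L f" "f \<noteq> (\<lambda>S. 0)"
  shows "fock_inner L f f \<noteq> 0"
proof -
  obtain S where S: "f S \<noteq> 0"
    using assms(2) by auto
  then have "S \<in> Pow {1..L}"
    using assms(1) by (auto simp: in_fock_def)
  with S have pos: "(\<Sum>T\<in>Pow {1..L}. (cmod (f T))\<^sup>2) > 0"
    by (intro sum_pos2) auto
  have "fock_inner L f f = complex_of_real (\<Sum>T\<in>Pow {1..L}. (cmod (f T))\<^sup>2)"
    unfolding fock_inner_def of_real_sum by (intro sum.cong refl) (metis complex_norm_square mult.commute)
  with pos show ?thesis
    by (metis of_real_eq_0_iff less_irrefl)
qed

interpretation fock_space: vector_space "\<lambda>(c::complex) (f::fock) S. c * f S"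
  by unfold_locales (auto simp: fun_eq_iff algebra_simps)

lemma sum_fun_apply: "(\<Sum>a\<in>A. g a) x = (\<Sum>a\<in>A. g a x)"
  by (induction A rule: infinite_finite_induct) auto

lemma in_fock_subset_span:
  "{f. in_fock L f} \<subseteq> fock_space.span ((\<lambda>T S. if S = T then 1 else 0) ` Pow {1..L})"
proof
  fix f assume "f \<in> {f. in_fock L f}"
  then have "f = (\<Sum>T\<in>Pow {1..L}. (\<lambda>S. f T * (if S = T then 1 else 0)))"
    by (auto simp: fun_eq_iff sum_fun_apply in_fock_def if_distrib cong: if_cong)
  also have "\<dots> \<in> fock_space.span ((\<lambda>T S. if S = T then 1 else 0) ` Pow {1..L})"
    by (intro fock_space.span_sum fock_space.span_scale fock_space.span_base) auto
  finally show "f \<in> fock_space.span ((\<lambda>T S. if S = T then 1 else 0) ` Pow {1..L})" .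
qed

locale orthogonal_fock_family =
  fixes L :: nat and I :: "'a set" and k :: "'a \<Rightarrow> fock"
  assumes finite_index: "finite I"
    and in_fock_family: "\<And>p. p \<in> I \<Longrightarrow> in_fock L (k p)"
    and family_nonzero: "\<And>p. p \<in> I \<Longrightarrow> k p \<noteq> (\<lambda>S. 0)"
    and family_orthogonal: "\<And>p q. p \<in> I \<Longrightarrow> q \<in> I \<Longrightarrow> p \<noteq> q \<Longrightarrow> fock_inner L (k p) (k q) = 0"
begin

lemma inj_on_family: "inj_on k I"
proof (rule inj_onI, rule ccontr)
  fix p q assume p: "p \<in> I" and q: "q \<in> I" and eq: "k p = k q" and ne: "p \<noteq> q"
  have "fock_inner L (k p) (k p) = 0"
    using family_orthogonal[OF p q ne] eq by simp
  with fock_inner_self_nonzero[OF in_fock_family[OF p] family_nonzero[OF p]] show False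
    by contradiction
qed

lemma independent_family: "fock_space.independent (k ` I)"
proof (rule fock_space.independent_if_scalars_zero)
  fix u x assume sum0: "(\<Sum>y\<in>k ` I. (\<lambda>S. u y * y S)) = 0" and x: "x \<in> k ` I"
  have "0 = fock_inner L x (\<Sum>y\<in>k ` I. (\<lambda>S. u y * y S))"
    unfolding sum0 by (simp add: fock_inner_def)
  also have "\<dots> = (\<Sum>y\<in>k ` I. u y * fock_inner L x y)"
    unfolding fock_inner_def sum_fun_apply
    by (simp add: sum_distrib_left algebra_simps) (rule sum.swap)
  also have "\<dots> = u x * fock_inner L x x + (\<Sum>y\<in>k ` I - {x}. u y * fock_inner L x y)"
    using finite_index x by (simp add: sum.remove)
  also have "(\<Sum>y\<in>k ` I - {x}. u y * fock_inner L x y) = 0"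
  proof (intro sum.neutral ballI)
    fix y assume "y \<in> k ` I - {x}"
    with x obtain p q where "p \<in> I" "q \<in> I" "x = k p" "y = k q" "p \<noteq> q"
      by blast
    then show "u y * fock_inner L x y = 0"
      by (simp add: family_orthogonal)
  qed
  finally have "u x * fock_inner L x x = 0"
    by simp
  moreover have "fock_inner L x x \<noteq> 0"
    using x fock_inner_self_nonzero in_fock_family family_nonzero by blast
  ultimately show "u x = 0"
    by simp
qed (use finite_index in simp)

lemma family_spans:
  assumes "card I = 2 ^ L" "in_fock L f"
  shows "\<exists>c. f = (\<lambda>S. \<Sum>p\<in>I. c p * k p S)"
proof -
  let ?E = "(\<lambda>T S. if S = T then 1 else 0) ` Pow {1..L} :: fock set"
  have "f \<in> fock_space.span (k ` I)"
  proof (rule ccontr)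
    assume f: "f \<notin> fock_space.span (k ` I)"
    then have independent: "fock_space.independent (insert f (k ` I))"
      by (rule fock_space.independent_insertI[OF _ independent_family])
    have "insert f (k ` I) \<subseteq> fock_space.span ?E"
      using in_fock_subset_span in_fock_family assms(2) by blast
    from fock_space.independent_span_bound[OF _ independent this]
    have "card (insert f (k ` I)) \<le> card ?E"
      by simp
    also have "\<dots> \<le> 2 ^ L"
      using card_image_le[of "Pow {1..L}"] by (simp add: card_Pow)
    finally have "card (insert f (k ` I)) \<le> card I"
      using assms(1) by simp
    moreover have "f \<notin> k ` I"
      using f fock_space.span_base by blast
    ultimately show False
      using finite_index by (simp add: card_image[OF inj_on_family])
  qed
  then obtain u where "f = (\<Sum>v\<in>k ` I. (\<lambda>S. u v * v S))"
    using fock_space.span_finite[of "k ` I"] finite_index by auto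
  then have "f = (\<lambda>S. \<Sum>p\<in>I. u (k p) * k p S)"
    by (simp add: fun_eq_iff sum_fun_apply sum.reindex[OF inj_on_family])
  then show ?thesis
    by (intro exI[of _ "\<lambda>p. u (k p)"])
qed

end

lemma card_idx: "card (idx L) = 2 ^ (L - 1)"
proof -
  define h where "h = (\<lambda>(A::nat set) (j::nat). if j \<in> A then (1::nat) else 0)"
  have "idx L = h ` Pow {1..<L}"
  proof (intro equalityI subsetI)
    fix i assume "i \<in> idx L"
    then have "i = h {j\<in>{1..<L}. i j = 1}"
      by (auto simp: idx_def h_def fun_eq_iff)
    then show "i \<in> h ` Pow {1..<L}"
      by blast
  qed (auto simp: idx_def h_def)
  moreover have "inj_on h (Pow {1..<L})"
    by (rule inj_onI) (auto simp: h_def fun_eq_iff split: if_splits)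
  ultimately show ?thesis
    by (simp add: card_image card_Pow)
qed

lemma finite_idx: "finite (idx L)"
  by (rule card_ge_0_finite) (simp add: card_idx)

lemma card_ket_index: "1 \<le> L \<Longrightarrow> card ({0::nat,1} \<times> idx L) = 2 ^ L"
  by (cases L) (simp_all add: card_cartesian_product card_idx)

theorem proposition3p6:
  fixes L :: nat and \<theta> :: real
  assumes "L \<ge> 2"
  shows "(\<forall>p\<in>{0,1} \<times> idx L. in_fock L (ket \<theta> L (fst p) (snd p)))
       \<and> (\<forall>p\<in>{0,1} \<times> idx L. ket \<theta> L (fst p) (snd p) \<noteq> (\<lambda>S. 0))
       \<and> (\<forall>p\<in>{0,1} \<times> idx L. \<forall>q\<in>{0,1} \<times> idx L. p \<noteq> q \<longrightarrow>
             fock_inner L (ket \<theta> L (fst p) (snd p)) (ket \<theta> L (fst q) (snd q)) = 0)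
       \<and> (\<forall>f. in_fock L f \<longrightarrow> (\<exists>c. f = (\<lambda>S. \<Sum>p\<in>{0,1} \<times> idx L. c p * ket \<theta> L (fst p) (snd p) S)))"
proof -
  let ?I = "{0::nat,1} \<times> idx L" and ?k = "\<lambda>p. ket \<theta> L (fst p) (snd p)"
  have "1 \<le> L"
    using assms by simp
  interpret orthogonal_fock_family L ?I ?k
  proof
    show "finite ?I"
      using finite_idx by simp
    show "in_fock L (?k p)" for p
      using \<open>1 \<le> L\<close> by (rule in_fock_ket)
    show "?k p \<noteq> (\<lambda>S. 0)" if "p \<in> ?I" for p
      using ket_nonzero[OF assms] that by auto
    show "fock_inner L (?k p) (?k q) = 0" if "p \<in> ?I" "q \<in> ?I" "p \<noteq> q" for p q
      using \<open>1 \<le> L\<close> that by (intro fock_inner_ket_distinct) (auto simp: prod_eq_iff)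
  qed
  show ?thesis
    using in_fock_family family_nonzero family_orthogonal family_spans[OF card_ket_index[OF \<open>1 \<le> L\<close>]]
    by blast
qed

end
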